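(* Let $F_1,\ldots,F_p$ be continuous univariate cumulative distribution functions and let $g:[0,1]^p\to\mathbb R$. If the map $\mathbf x\mapsto g(F_1(x_1),\ldots,F_p(x_p))$ is continuous on $[-\infty,\infty]^p$, then $g$ is continuous on $[0,1]^p$.
   Context: Cumulative distribution functions are extended to $[-\infty,\infty]$ by $F_j(-\infty)=0$, $F_j(+\infty)=1$. *)

theory Defs
  imports "HOL-Probability.Probability"
begin

definition ext_cdf :: "(real \<Rightarrow> real) \<Rightarrow> ereal \<Rightarrow> real" where
  "ext_cdf F t = (case t of ereal x \<Rightarrow> F x | PInfty \<Rightarrow> 1 | MInfty \<Rightarrow> 0)"

end

theory Submission
  imports Defs "HOL-Real_Asymp.Real_Asymp"
begin

text \<open>The extended line [-\<infinity>,\<infinity>] is a continuous image of the compact interval [-1,1],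
  via x \<mapsto> x / (1 - |x|). Composing, \<psi>(t) = (F_j(t_j))_j maps the compact cube [-1,1]^p
  continuously onto [0,1]^p (onto by the intermediate value theorem, since each coordinate
  runs continuously from 0 to 1), and g \<circ> \<psi> is continuous by hypothesis. A continuous
  surjection from a compact space onto a Hausdorff space is a quotient map, so g is continuous.\<close>

definition unit_to_ereal :: "real \<Rightarrow> ereal" where
  "unit_to_ereal x = (if x \<le> -1 then -\<infinity> else if 1 \<le> x then \<infinity> else ereal (x / (1 - \<bar>x\<bar>)))"

lemma continuous_on_compose_unit_to_ereal:
  fixes h :: "ereal \<Rightarrow> 'a::topological_space"
  assumes cont: "continuous_on UNIV (\<lambda>x. h (ereal x))"
    and top: "((\<lambda>x. h (ereal x)) \<longlongrightarrow> h \<infinity>) at_top"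
    and bot: "((\<lambda>x. h (ereal x)) \<longlongrightarrow> h (-\<infinity>)) at_bot"
  shows "continuous_on {-1..1} (\<lambda>x. h (unit_to_ereal x))"
proof (rule continuous_on_IccI)
  have "filterlim (\<lambda>x::real. x / (1 - x)) at_top (at_left 1)"
    by real_asymp
  then have "((\<lambda>x. h (ereal (x / (1 - x)))) \<longlongrightarrow> h \<infinity>) (at_left 1)"
    by (rule filterlim_compose[OF top])
  moreover have "eventually (\<lambda>x. x \<in> {0<..<1}) (at_left (1::real))"
    by (rule eventually_at_left_real) simp
  then have "eventually (\<lambda>x. h (unit_to_ereal x) = h (ereal (x / (1 - x)))) (at_left 1)"
    by eventually_elim (auto simp: unit_to_ereal_def)
  ultimately show "((\<lambda>x. h (unit_to_ereal x)) \<longlongrightarrow> h (unit_to_ereal 1)) (at_left 1)"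
    by (simp add: tendsto_cong unit_to_ereal_def)
next
  have "filterlim (\<lambda>x::real. x / (1 + x)) at_bot (at_right (-1))"
    by real_asymp
  then have "((\<lambda>x. h (ereal (x / (1 + x)))) \<longlongrightarrow> h (-\<infinity>)) (at_right (-1))"
    by (rule filterlim_compose[OF bot])
  moreover have "eventually (\<lambda>x. x \<in> {-1<..<0}) (at_right (-1::real))"
    by (rule eventually_at_right_real) simp
  then have "eventually (\<lambda>x. h (unit_to_ereal x) = h (ereal (x / (1 + x)))) (at_right (-1))"
    by eventually_elim (auto simp: unit_to_ereal_def)
  ultimately show "((\<lambda>x. h (unit_to_ereal x)) \<longlongrightarrow> h (unit_to_ereal (-1))) (at_right (-1))"
    by (simp add: tendsto_cong unit_to_ereal_def)
next
  fix x :: real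
  assume x: "-1 < x" "x < 1"
  have "eventually (\<lambda>y. y \<in> {-1<..<1}) (nhds x)"
    using x by (intro eventually_nhds_in_open) auto
  then have "eventually (\<lambda>y. h (unit_to_ereal y) = h (ereal (y / (1 - \<bar>y\<bar>)))) (nhds x)"
    by eventually_elim (auto simp: unit_to_ereal_def)
  moreover have "isCont (\<lambda>y. h (ereal (y / (1 - \<bar>y\<bar>)))) x"
  proof (rule isCont_o2[where g = "\<lambda>z. h (ereal z)"])
    show "isCont (\<lambda>y. y / (1 - \<bar>y\<bar>)) x"
      using x by (intro continuous_intros) auto
    show "isCont (\<lambda>z. h (ereal z)) (x / (1 - \<bar>x\<bar>))"
      using cont by (simp add: continuous_on_eq_continuous_at)
  qed
  ultimately have "isCont (\<lambda>y. h (unit_to_ereal y)) x"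
    by (simp add: isCont_cong)
  then show "(\<lambda>y. h (unit_to_ereal y)) \<midarrow>x\<rightarrow> h (unit_to_ereal x)"
    by (simp add: isCont_def)
qed (simp)

lemma continuous_on_unit_to_ereal: "continuous_on {-1..1} unit_to_ereal"
proof -
  have "((ereal \<circ> (\<lambda>x. x)) \<longlongrightarrow> \<infinity>) at_top" "((ereal \<circ> (\<lambda>x. x)) \<longlongrightarrow> -\<infinity>) at_bot"
    unfolding ereal_tendsto_simps2 by (simp_all add: filterlim_ident)
  then show ?thesis
    using continuous_on_compose_unit_to_ereal[of "\<lambda>x. x"] by (simp add: o_def continuous_intros)
qed

lemma continuous_on_ext_cdf_unit_to_ereal:
  assumes "real_distribution M" and "continuous_on UNIV (cdf M)"
  shows "continuous_on {-1..1} (\<lambda>x. ext_cdf (cdf M) (unit_to_ereal x))"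
proof (rule continuous_on_compose_unit_to_ereal)
  interpret real_distribution M by fact
  show "continuous_on UNIV (\<lambda>x. ext_cdf (cdf M) (ereal x))"
    using assms(2) by (simp add: ext_cdf_def)
  show "((\<lambda>x. ext_cdf (cdf M) (ereal x)) \<longlongrightarrow> ext_cdf (cdf M) \<infinity>) at_top"
    using cdf_lim_at_top_prob by (simp add: ext_cdf_def)
  show "((\<lambda>x. ext_cdf (cdf M) (ereal x)) \<longlongrightarrow> ext_cdf (cdf M) (-\<infinity>)) at_bot"
    using cdf_lim_at_bot by (simp add: ext_cdf_def)
qed

lemma ext_cdf_unit_to_ereal_image:
  assumes "real_distribution M" and "continuous_on UNIV (cdf M)"
  shows "(\<lambda>x. ext_cdf (cdf M) (unit_to_ereal x)) ` {-1..1} = {0..1}"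
proof
  interpret real_distribution M by fact
  show "(\<lambda>x. ext_cdf (cdf M) (unit_to_ereal x)) ` {-1..1} \<subseteq> {0..1}"
    using cdf_nonneg cdf_bounded_prob by (auto simp: ext_cdf_def unit_to_ereal_def)
  show "{0..1} \<subseteq> (\<lambda>x. ext_cdf (cdf M) (unit_to_ereal x)) ` {-1..1}"
  proof
    fix u :: real
    assume "u \<in> {0..1}"
    then obtain x where "-1 \<le> x" "x \<le> 1" "ext_cdf (cdf M) (unit_to_ereal x) = u"
      using IVT'[of "\<lambda>x. ext_cdf (cdf M) (unit_to_ereal x)" "-1" u 1]
        continuous_on_ext_cdf_unit_to_ereal[OF assms]
      by (auto simp: ext_cdf_def unit_to_ereal_def)
    then show "u \<in> (\<lambda>x. ext_cdf (cdf M) (unit_to_ereal x)) ` {-1..1}"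
      by auto
  qed
qed

lemma continuous_on_compose_compact_surjection:
  fixes \<psi> :: "'a::t2_space \<Rightarrow> 'b::t2_space" and g :: "'b \<Rightarrow> 'c::topological_space"
  assumes "compact K" and "continuous_on K \<psi>" and "\<psi> ` K = S"
    and "continuous_on K (g \<circ> \<psi>)"
  shows "continuous_on S g"
  unfolding continuous_on_open_invariant
proof (intro allI impI)
  fix B :: "'c set"
  assume "open B"
  have "openin (top_of_set K) (K \<inter> (g \<circ> \<psi>) -` B)"
    using assms(4) \<open>open B\<close> by (rule continuous_openin_preimage_gen)
  moreover have "K \<inter> (g \<circ> \<psi>) -` B = K \<inter> \<psi> -` (S \<inter> g -` B)"
    using assms(3) by auto
  ultimately have "openin (top_of_set S) (S \<inter> g -` B)"
    using Abstract_Topology_2.continuous_imp_quotient_map[OF assms(2,3,1), of "S \<inter> g -` B"]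
    by simp
  then show "\<exists>A. open A \<and> A \<inter> S = g -` B \<inter> S"
    unfolding openin_open by blast
qed

lemma continuous_on_vec_lambda_cbox:
  fixes a b :: "real^'n" and f :: "'n \<Rightarrow> real \<Rightarrow> 'a::topological_space"
  assumes "\<And>j. continuous_on {a $ j..b $ j} (f j)"
  shows "continuous_on (cbox a b) (\<lambda>t. \<chi> j. f j (t $ j))"
proof (rule continuous_on_vec_lambda)
  fix j
  have "(\<lambda>t. t $ j) ` cbox a b \<subseteq> {a $ j..b $ j}"
    by (auto simp: mem_box_cart)
  then show "continuous_on (cbox a b) (\<lambda>t. f j (t $ j))"
    by (rule continuous_on_compose2[OF assms continuous_on_component[OF continuous_on_id]])
qed

lemma image_vec_lambda_cbox:
  fixes a b :: "real^'n" and f :: "'n \<Rightarrow> real \<Rightarrow> 'a"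
  shows "(\<lambda>t. \<chi> j. f j (t $ j)) ` cbox a b = {u. \<forall>j. u $ j \<in> f j ` {a $ j..b $ j}}"
proof
  show "(\<lambda>t. \<chi> j. f j (t $ j)) ` cbox a b \<subseteq> {u. \<forall>j. u $ j \<in> f j ` {a $ j..b $ j}}"
    by (auto simp: mem_box_cart)
  show "{u. \<forall>j. u $ j \<in> f j ` {a $ j..b $ j}} \<subseteq> (\<lambda>t. \<chi> j. f j (t $ j)) ` cbox a b"
  proof
    fix u
    assume "u \<in> {u. \<forall>j. u $ j \<in> f j ` {a $ j..b $ j}}"
    then have "\<forall>j. \<exists>x. x \<in> {a $ j..b $ j} \<and> u $ j = f j x"
      by blast
    then obtain t where t: "\<And>j. t j \<in> {a $ j..b $ j} \<and> u $ j = f j (t j)"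
      by metis
    have "(\<chi> j. t j) \<in> cbox a b"
      using t by (simp add: mem_box_cart)
    moreover have "u = (\<chi> j. f j ((\<chi> j. t j) $ j))"
      using t by (simp add: vec_eq_iff)
    ultimately show "u \<in> (\<lambda>t. \<chi> j. f j (t $ j)) ` cbox a b"
      by blast
  qed
qed

theorem lemma4p1:
  fixes F :: "'n::finite \<Rightarrow> real \<Rightarrow> real" and g :: "real^'n \<Rightarrow> real"
  assumes cdfs: "\<forall>j. \<exists>M. real_distribution M \<and> F j = cdf M"
    and cont_F: "\<forall>j. continuous_on UNIV (F j)"
    and cont_comp: "continuous_on UNIV (\<lambda>x::ereal^'n. g (\<chi> j. ext_cdf (F j) (x $ j)))"
  shows "continuous_on {u::real^'n. \<forall>j. 0 \<le> u $ j \<and> u $ j \<le> 1} g"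
proof -
  obtain M where M: "\<And>j. real_distribution (M j)" and F: "\<And>j. F j = cdf (M j)"
    using cdfs by metis
  define K :: "(real^'n) set" where "K = cbox (- 1) 1"
  define \<psi> where "\<psi> t = (\<chi> j. ext_cdf (F j) (unit_to_ereal (t $ j)))" for t :: "real^'n"
  have "\<psi> ` K = {u. \<forall>j. u $ j \<in> (\<lambda>x. ext_cdf (F j) (unit_to_ereal x)) ` {-1..1}}"
    unfolding K_def \<psi>_def
    by (simp add: image_vec_lambda_cbox[where f = "\<lambda>j x. ext_cdf (F j) (unit_to_ereal x)"])
  also have "\<dots> = {u. \<forall>j. 0 \<le> u $ j \<and> u $ j \<le> 1}"
    using M cont_F by (simp add: F ext_cdf_unit_to_ereal_image)
  finally have image: "\<psi> ` K = {u. \<forall>j. 0 \<le> u $ j \<and> u $ j \<le> 1}" .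
  have "continuous_on K \<psi>"
    unfolding K_def \<psi>_def using M cont_F
    by (intro continuous_on_vec_lambda_cbox) (simp add: F continuous_on_ext_cdf_unit_to_ereal)
  moreover have "continuous_on K (\<lambda>t. \<chi> j. unit_to_ereal (t $ j))"
    unfolding K_def by (intro continuous_on_vec_lambda_cbox) (simp add: continuous_on_unit_to_ereal)
  then have "continuous_on K
      ((\<lambda>x. g (\<chi> j. ext_cdf (F j) (x $ j))) \<circ> (\<lambda>t. \<chi> j. unit_to_ereal (t $ j)))"
    by (rule continuous_on_compose) (rule continuous_on_subset[OF cont_comp], simp)
  then have "continuous_on K (g \<circ> \<psi>)"
    by (simp add: o_def \<psi>_def)
  ultimately show ?thesis
    using compact_cbox K_def image by (metis continuous_on_compose_compact_surjection)
qed

end
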